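(* For every integer $d\ge 2$, $\mathcal Q_d$ is dense in $\mathcal A_d$; consequently the spaces $\mathcal P_d$ and $\mathcal O_d$ are also dense in $\mathcal A_d$.
   Context: A polynomial knot is a map $\phi:\mathbb R\to\mathbb R^3$ with real polynomial components which is a smooth embedding ($\phi$ injective and $\phi'(t)\ne0$ for all $t$). For $d\ge2$, $\mathcal A_d$ is the set of polynomial maps $t\mapsto(f(t),g(t),h(t))$ with $\deg f\le d-2$, $\deg g\le d-1$, $\deg h\le d$ (zero polynomial allowed, degree $-\infty$), topologized via the bijection with Euclidean $\mathbb R^{3d}$ sending $(f,g,h)$ to its coefficient vector $(a_0,\dots,a_{d-2},b_0,\dots,b_{d-1},c_0,\dots,c_d)$, where $f=\sum a_it^i$, $g=\sum b_it^i$, $h=\sum c_it^i$. $\mathcal O_d$ is the set of polynomial knots in $\mathcal A_d$; $\mathcal P_d$ is the set of polynomial knots $(f,g,h)$ with $\deg f<\deg g<\deg h\le d$; $\mathcal Q_d$ is the set of polynomial knots $(f,g,h)$ with $\deg f=d-2$, $\deg g=d-1$, $\deg h=d$ exactly. *)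

theory Defs
  imports "HOL-Computational_Algebra.Polynomial" "HOL-Library.Extended_Real"
begin

type_synonym ptriple = "real poly \<times> real poly \<times> real poly"

definition pdeg :: "real poly \<Rightarrow> ereal" where
  "pdeg p = (if p = 0 then -\<infinity> else ereal (real (degree p)))"

definition pmap :: "ptriple \<Rightarrow> real \<Rightarrow> real \<times> real \<times> real" where
  "pmap \<phi> t = (case \<phi> of (f, g, h) \<Rightarrow> (poly f t, poly g t, poly h t))"

definition poly_knot :: "ptriple \<Rightarrow> bool" where
  "poly_knot \<phi> = (case \<phi> of (f, g, h) \<Rightarrow>
     inj (pmap \<phi>) \<and>
     (\<forall>t. (poly (pderiv f) t, poly (pderiv g) t, poly (pderiv h) t) \<noteq> (0, 0, 0)))"

definition A_set :: "nat \<Rightarrow> ptriple set" where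
  "A_set d = {(f, g, h). pdeg f \<le> ereal (real d - 2) \<and> pdeg g \<le> ereal (real d - 1)
                         \<and> pdeg h \<le> ereal (real d)}"

definition O_set :: "nat \<Rightarrow> ptriple set" where
  "O_set d = {\<phi> \<in> A_set d. poly_knot \<phi>}"

definition P_set :: "nat \<Rightarrow> ptriple set" where
  "P_set d = {(f, g, h). poly_knot (f, g, h) \<and> pdeg f < pdeg g \<and> pdeg g < pdeg h
                         \<and> pdeg h \<le> ereal (real d)}"

definition Q_set :: "nat \<Rightarrow> ptriple set" where
  "Q_set d = {(f, g, h). poly_knot (f, g, h) \<and> pdeg f = ereal (real d - 2)
                         \<and> pdeg g = ereal (real d - 1) \<and> pdeg h = ereal (real d)}"

text \<open>Euclidean distance in R^(3d) between the coefficient vectors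
  (a_0..a_{d-2}, b_0..b_{d-1}, c_0..c_d) of two elements of A_d.\<close>
definition coeff_dist :: "nat \<Rightarrow> ptriple \<Rightarrow> ptriple \<Rightarrow> real" where
  "coeff_dist d \<phi> \<psi> = (case \<phi> of (f, g, h) \<Rightarrow> case \<psi> of (f', g', h') \<Rightarrow>
     sqrt ((\<Sum>i<d - 1. (coeff f i - coeff f' i)\<^sup>2)
         + (\<Sum>i<d. (coeff g i - coeff g' i)\<^sup>2)
         + (\<Sum>i\<le>d. (coeff h i - coeff h' i)\<^sup>2)))"

definition dense_in_A :: "nat \<Rightarrow> ptriple set \<Rightarrow> bool" where
  "dense_in_A d S = (S \<subseteq> A_set d \<and>
     (\<forall>\<phi> \<in> A_set d. \<forall>\<epsilon>>0. \<exists>\<psi> \<in> S. coeff_dist d \<phi> \<psi> < \<epsilon>))"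

end

theory Submission
  imports Defs "HOL-Analysis.Analysis"
begin

text \<open>Bumping vanishing leading coefficients by a tiny amount gives exact degrees d-2, d-1, d.
  Adding a linear term t v to a polynomial map p spoils the knot property only if -v is a secant
  slope (p s - p t) / (s - t) or a velocity p' t. These are images of the plane and of the line
  under smooth maps into 3-space, hence null sets, so arbitrarily small v yield knots. For d \<ge> 4
  the linear term leaves the leading coefficients alone; for d \<le> 3 one component already has
  degree one, so the map is injective and regular without any shift. Density of Q_d passes to
  the intermediate sets P_d and O_d.\<close>

lemma differentiable_poly_compose [derivative_intros]:
  fixes k :: "'a::real_normed_vector \<Rightarrow> real"
  assumes "k differentiable (at x within S)"
  shows "(\<lambda>x. poly p (k x)) differentiable (at x within S)"
  using differentiable_chain_within[OF assms, of "poly p"]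
  by (simp add: o_def differentiable_at_withinI)

lemma pmap_differentiable [derivative_intros]:
  fixes k :: "'a::real_normed_vector \<Rightarrow> real"
  assumes "k differentiable (at x within S)"
  shows "(\<lambda>x. pmap \<phi> (k x)) differentiable (at x within S)"
  using assms by (cases \<phi>) (auto simp: pmap_def intro!: derivative_intros)

definition velocity :: "ptriple \<Rightarrow> real \<Rightarrow> real \<times> real \<times> real" where
  "velocity \<phi> = pmap (case \<phi> of (f, g, h) \<Rightarrow> (pderiv f, pderiv g, pderiv h))"

definition secant_directions :: "ptriple \<Rightarrow> (real \<times> real \<times> real) set" where
  "secant_directions \<phi> = (\<lambda>(s, t). (pmap \<phi> s - pmap \<phi> t) /\<^sub>R (s - t)) ` {(s, t). s \<noteq> t}"

lemma negligible_secant_directions: "negligible (secant_directions \<phi>)"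
  unfolding secant_directions_def
  by (rule negligible_differentiable_image_lowdim)
     (auto simp: differentiable_on_def case_prod_unfold intro!: derivative_intros
       bounded_linear_imp_differentiable[OF bounded_linear_fst]
       bounded_linear_imp_differentiable[OF bounded_linear_snd])

lemma negligible_range_velocity: "negligible (range (velocity \<phi>))"
  unfolding velocity_def
  by (rule negligible_differentiable_image_lowdim)
     (auto simp: differentiable_on_def intro!: derivative_intros)

definition add_linear :: "real \<times> real \<times> real \<Rightarrow> ptriple \<Rightarrow> ptriple" where
  "add_linear v \<phi> = (case (v, \<phi>) of ((a, b, c), (f, g, h)) \<Rightarrow>
     (f + [:0, a:], g + [:0, b:], h + [:0, c:]))"

lemma pmap_add_linear: "pmap (add_linear v \<phi>) t = pmap \<phi> t + t *\<^sub>R v"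
  by (cases v; cases \<phi>) (simp add: add_linear_def pmap_def algebra_simps)

lemma velocity_add_linear: "velocity (add_linear v \<phi>) t = velocity \<phi> t + v"
  by (cases v; cases \<phi>) (simp add: add_linear_def velocity_def pmap_def pderiv_add pderiv_pCons)

lemma poly_knot_iff: "poly_knot \<phi> \<longleftrightarrow> inj (pmap \<phi>) \<and> (\<forall>t. velocity \<phi> t \<noteq> 0)"
  by (cases \<phi>) (simp add: poly_knot_def velocity_def pmap_def zero_prod_def)

lemma poly_knot_add_linear:
  assumes "- v \<notin> secant_directions \<phi>" and "- v \<notin> range (velocity \<phi>)"
  shows "poly_knot (add_linear v \<phi>)"
  unfolding poly_knot_iff
proof (intro conjI allI injI)
  fix s t assume "pmap (add_linear v \<phi>) s = pmap (add_linear v \<phi>) t"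
  then have "pmap \<phi> s - pmap \<phi> t = (s - t) *\<^sub>R (- v)"
    by (simp add: pmap_add_linear algebra_simps)
  then have "s \<noteq> t \<Longrightarrow> - v \<in> secant_directions \<phi>"
    unfolding secant_directions_def by (intro image_eqI[where x = "(s, t)"]) auto
  then show "s = t" using assms(1) by blast
next
  fix t show "velocity (add_linear v \<phi>) t \<noteq> 0"
    using assms(2) by (metis add_eq_0_iff2 rangeI velocity_add_linear)
qed

lemma exists_small_shift_poly_knot:
  assumes "r > 0"
  obtains v where "norm v < r" and "poly_knot (add_linear v \<phi>)"
proof -
  let ?N = "secant_directions \<phi> \<union> range (velocity \<phi>)"
  have "negligible ?N"
    by (simp add: negligible_secant_directions negligible_range_velocity)
  moreover have "\<not> negligible (ball (0 :: real \<times> real \<times> real) r)"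
    using assms by (intro open_not_negligible) auto
  ultimately obtain w where "w \<in> ball 0 r" "w \<notin> ?N"
    using negligible_subset by blast
  then show thesis
    using that[of "- w"] poly_knot_add_linear[of "- w" \<phi>] by simp
qed

definition coeffs_within :: "real \<Rightarrow> ptriple \<Rightarrow> ptriple \<Rightarrow> bool" where
  "coeffs_within \<eta> \<phi> \<psi> = (case \<phi> of (f, g, h) \<Rightarrow> case \<psi> of (f', g', h') \<Rightarrow>
     \<forall>i. \<bar>coeff f i - coeff f' i\<bar> \<le> \<eta> \<and> \<bar>coeff g i - coeff g' i\<bar> \<le> \<eta>
       \<and> \<bar>coeff h i - coeff h' i\<bar> \<le> \<eta>)"

lemma coeffs_within_refl: "0 \<le> \<eta> \<Longrightarrow> coeffs_within \<eta> \<phi> \<phi>"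
  by (cases \<phi>) (simp add: coeffs_within_def)

lemma coeffs_within_trans:
  assumes "coeffs_within \<eta> \<phi> \<psi>" and "coeffs_within \<eta>' \<psi> \<xi>"
  shows "coeffs_within (\<eta> + \<eta>') \<phi> \<xi>"
proof -
  have "\<bar>x - z\<bar> \<le> \<eta> + \<eta>'" if "\<bar>x - y\<bar> \<le> \<eta>" "\<bar>y - z\<bar> \<le> \<eta>'" for x y z :: real
    using that by linarith
  with assms show ?thesis
    unfolding coeffs_within_def by (auto split: prod.splits) blast+
qed

lemma coeffs_within_mono: "coeffs_within \<eta> \<phi> \<psi> \<Longrightarrow> \<eta> \<le> \<eta>' \<Longrightarrow> coeffs_within \<eta>' \<phi> \<psi>"
  unfolding coeffs_within_def by (auto split: prod.splits intro: order.trans)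

lemma abs_coeff_linear_le: "\<bar>coeff [:0, a:] i\<bar> \<le> \<bar>a :: real\<bar>"
  by (cases i) (auto simp: coeff_pCons split: nat.split)

lemma coeffs_within_add_linear: "coeffs_within (norm v) \<phi> (add_linear v \<phi>)"
proof -
  obtain a b c where v: "v = (a, b, c)" by (cases v)
  have "\<bar>a\<bar> \<le> norm v" "\<bar>b\<bar> \<le> norm v" "\<bar>c\<bar> \<le> norm v"
    using norm_fst_le[of a "(b, c)"] norm_snd_le[of "(b, c)" a]
      norm_fst_le[of b c] norm_snd_le[of c b] by (auto simp: v)
  moreover have "\<bar>coeff p i - coeff (p + [:0, x:]) i\<bar> = \<bar>coeff [:0, x:] i\<bar>"
    for p :: "real poly" and x :: real and i
    by (simp add: algebra_simps)
  ultimately show ?thesis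
    using abs_coeff_linear_le
    by (cases \<phi>) (simp add: coeffs_within_def add_linear_def v, meson order.trans)
qed

lemma sum_squares_le_card:
  assumes "\<And>i. \<bar>x i\<bar> \<le> \<eta>"
  shows "(\<Sum>i\<in>A. (x i)\<^sup>2) \<le> real (card A) * \<eta>\<^sup>2"
proof -
  have "(x i)\<^sup>2 \<le> \<eta>\<^sup>2" for i
    using assms[of i] by (metis abs_ge_zero power2_abs power_mono)
  then show ?thesis by (intro sum_bounded_above) auto
qed

lemma coeff_dist_le:
  assumes "coeffs_within \<eta> \<phi> \<psi>"
  shows "coeff_dist d \<phi> \<psi> \<le> sqrt (3 * (real d + 1)) * \<eta>"
proof -
  obtain f g h f' g' h' where \<phi>: "\<phi> = (f, g, h)" and \<psi>: "\<psi> = (f', g', h')"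
    by (cases \<phi>; cases \<psi>)
  have bounds: "\<bar>coeff f i - coeff f' i\<bar> \<le> \<eta>" "\<bar>coeff g i - coeff g' i\<bar> \<le> \<eta>"
    "\<bar>coeff h i - coeff h' i\<bar> \<le> \<eta>" for i
    using assms by (auto simp: coeffs_within_def \<phi> \<psi>)
  have "\<eta> \<ge> 0" using bounds(1)[of 0] by linarith
  have card: "real (card {..<d - 1}) \<le> real d + 1" "real (card {..<d}) \<le> real d + 1"
    "real (card {..d}) \<le> real d + 1" by simp_all
  have "(\<Sum>i<d - 1. (coeff f i - coeff f' i)\<^sup>2) \<le> (real d + 1) * \<eta>\<^sup>2"
    by (rule order.trans[OF sum_squares_le_card[OF bounds(1)]])
       (intro mult_right_mono card(1) zero_le_power2)
  moreover have "(\<Sum>i<d. (coeff g i - coeff g' i)\<^sup>2) \<le> (real d + 1) * \<eta>\<^sup>2"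
    by (rule order.trans[OF sum_squares_le_card[OF bounds(2)]])
       (intro mult_right_mono card(2) zero_le_power2)
  moreover have "(\<Sum>i\<le>d. (coeff h i - coeff h' i)\<^sup>2) \<le> (real d + 1) * \<eta>\<^sup>2"
    by (rule order.trans[OF sum_squares_le_card[OF bounds(3)]])
       (intro mult_right_mono card(3) zero_le_power2)
  ultimately have "coeff_dist d \<phi> \<psi> \<le> sqrt (3 * (real d + 1) * \<eta>\<^sup>2)"
    unfolding coeff_dist_def \<phi> \<psi> prod.case by (intro real_sqrt_le_mono) linarith
  also have "\<dots> = sqrt (3 * (real d + 1)) * \<eta>"
    by (simp only: real_sqrt_mult real_sqrt_abs abs_of_nonneg[OF \<open>\<eta> \<ge> 0\<close>])
  finally show ?thesis .
qed

lemma exists_exact_degree_near: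
  fixes p :: "real poly"
  assumes "degree p \<le> n" and "\<delta> > 0"
  obtains q where "q \<noteq> 0" "degree q = n" "\<And>i. \<bar>coeff p i - coeff q i\<bar> \<le> \<delta>"
proof -
  define q where "q = p + monom (if coeff p n = 0 then \<delta> else 0) n"
  have lead: "coeff q n \<noteq> 0"
    using assms(2) by (simp add: q_def coeff_monom)
  have "degree q \<le> n"
    using assms(1) unfolding q_def
    by (intro degree_add_le) (auto intro: order.trans[OF degree_monom_le])
  with lead have "degree q = n" by (simp add: le_antisym le_degree)
  moreover have "\<bar>coeff p i - coeff q i\<bar> \<le> \<delta>" for i
    using assms(2) by (simp add: q_def coeff_monom)
  moreover have "q \<noteq> 0" using lead by auto
  ultimately show thesis using that by blast
qed

lemma degree_add_linear: "2 \<le> degree p \<Longrightarrow> degree (p + [:0, a:]) = degree p"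
  by (rule degree_add_eq_left) simp

lemma linear_poly_injective_regular:
  fixes p :: "real poly"
  assumes "degree p = 1"
  shows "inj (poly p)" and "poly (pderiv p) t \<noteq> 0"
proof -
  have p: "p = [:coeff p 0, coeff p 1:]"
    by (rule poly_eqI) (auto simp: coeff_pCons coeff_eq_0 assms split: nat.split)
  have c: "coeff p 1 \<noteq> 0" using assms by (metis leading_coeff_0_iff degree_0 zero_neq_one)
  show "inj (poly p)"
    by (rule injI, subst (asm) (1 2) p) (use c in simp)
  show "poly (pderiv p) t \<noteq> 0"
    by (subst p) (use c in \<open>simp add: pderiv_pCons\<close>)
qed

lemma poly_knot_if_degree_one:
  assumes "degree f = 1 \<or> degree g = 1"
  shows "poly_knot (f, g, h)"
  using assms
proof
  assume "degree f = 1"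
  then show ?thesis
    using linear_poly_injective_regular[of f] by (auto simp: poly_knot_def pmap_def inj_def)
next
  assume "degree g = 1"
  then show ?thesis
    using linear_poly_injective_regular[of g] by (auto simp: poly_knot_def pmap_def inj_def)
qed

lemma pdeg_le_iff: "pdeg p \<le> ereal (real n) \<longleftrightarrow> degree p \<le> n"
  by (simp add: pdeg_def)

lemma pdeg_eq_iff: "pdeg p = ereal (real n) \<longleftrightarrow> p \<noteq> 0 \<and> degree p = n"
  by (simp add: pdeg_def)

lemma mem_A_set:
  assumes "2 \<le> d"
  shows "(f, g, h) \<in> A_set d \<longleftrightarrow> degree f \<le> d - 2 \<and> degree g \<le> d - 1 \<and> degree h \<le> d"
  using assms pdeg_le_iff[of f "d - 2"] pdeg_le_iff[of g "d - 1"] pdeg_le_iff[of h d]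
  by (simp add: A_set_def of_nat_diff)

lemma mem_Q_set:
  assumes "2 \<le> d"
  shows "(f, g, h) \<in> Q_set d \<longleftrightarrow>
    poly_knot (f, g, h) \<and> f \<noteq> 0 \<and> degree f = d - 2 \<and> degree g = d - 1 \<and> degree h = d"
  using assms pdeg_eq_iff[of f "d - 2"] pdeg_eq_iff[of g "d - 1"] pdeg_eq_iff[of h d]
  by (auto simp: Q_set_def of_nat_diff)

lemma Q_set_near_exact_degree:
  assumes d: "2 \<le> d" and "f \<noteq> 0" and deg: "degree f = d - 2" "degree g = d - 1" "degree h = d"
    and "\<delta> > 0"
  shows "\<exists>\<psi> \<in> Q_set d. coeffs_within \<delta> (f, g, h) \<psi>"
proof (cases "4 \<le> d")
  case True
  obtain v where v: "norm v < \<delta>" "poly_knot (add_linear v (f, g, h))"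
    using exists_small_shift_poly_knot \<open>\<delta> > 0\<close> by blast
  obtain a b c where abc: "v = (a, b, c)" by (cases v)
  have "degree (f + [:0, a:]) = d - 2" "degree (g + [:0, b:]) = d - 1"
    "degree (h + [:0, c:]) = d"
    using True by (simp_all add: deg degree_add_linear)
  moreover from this have "f + [:0, a:] \<noteq> 0" using True by auto
  ultimately have "add_linear v (f, g, h) \<in> Q_set d"
    using v(2) d by (simp add: abc add_linear_def mem_Q_set)
  moreover have "coeffs_within \<delta> (f, g, h) (add_linear v (f, g, h))"
    using coeffs_within_mono[OF coeffs_within_add_linear] v(1) by simp
  ultimately show ?thesis by blast
next
  case False
  with d deg have "degree f = 1 \<or> degree g = 1" by auto
  then have "(f, g, h) \<in> Q_set d"
    using poly_knot_if_degree_one assms by (simp add: mem_Q_set)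
  moreover have "coeffs_within \<delta> (f, g, h) (f, g, h)"
    using \<open>\<delta> > 0\<close> by (simp add: coeffs_within_refl)
  ultimately show ?thesis by blast
qed

lemma Q_set_near:
  assumes d: "2 \<le> d" and "\<phi> \<in> A_set d" and "\<delta> > 0"
  shows "\<exists>\<psi> \<in> Q_set d. coeffs_within \<delta> \<phi> \<psi>"
proof -
  obtain f g h where \<phi>: "\<phi> = (f, g, h)" by (cases \<phi>)
  have "degree f \<le> d - 2" "degree g \<le> d - 1" "degree h \<le> d"
    using assms(2) d by (simp_all add: \<phi> mem_A_set)
  moreover have "\<delta> / 2 > 0" using \<open>\<delta> > 0\<close> by simp
  ultimately obtain f' g' h' where "f' \<noteq> 0"
    "degree f' = d - 2" "degree g' = d - 1" "degree h' = d"
    and near: "coeffs_within (\<delta> / 2) \<phi> (f', g', h')"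
    unfolding \<phi> coeffs_within_def prod.case by (metis exists_exact_degree_near)
  then obtain \<psi> where "\<psi> \<in> Q_set d" "coeffs_within (\<delta> / 2) (f', g', h') \<psi>"
    using Q_set_near_exact_degree d \<open>\<delta> / 2 > 0\<close> by blast
  with near coeffs_within_trans show ?thesis by fastforce
qed

lemma dense_in_A_Q_set:
  assumes "2 \<le> d"
  shows "dense_in_A d (Q_set d)"
  unfolding dense_in_A_def
proof (intro conjI ballI allI impI)
  show "Q_set d \<subseteq> A_set d"
    using assms by (auto simp: mem_Q_set mem_A_set)
next
  fix \<phi> and \<epsilon> :: real
  assume "\<phi> \<in> A_set d" "\<epsilon> > 0"
  define C where "C = sqrt (3 * (real d + 1))"
  have "C > 0" by (simp add: C_def)
  then have "\<epsilon> / (2 * C) > 0" using \<open>\<epsilon> > 0\<close> by simp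
  then obtain \<psi> where "\<psi> \<in> Q_set d" "coeffs_within (\<epsilon> / (2 * C)) \<phi> \<psi>"
    using Q_set_near[OF assms \<open>\<phi> \<in> A_set d\<close>] by blast
  moreover have "C * (\<epsilon> / (2 * C)) < \<epsilon>" using \<open>C > 0\<close> \<open>\<epsilon> > 0\<close> by simp
  ultimately show "\<exists>\<psi> \<in> Q_set d. coeff_dist d \<phi> \<psi> < \<epsilon>"
    using coeff_dist_le unfolding C_def by (meson order.strict_trans1)
qed

lemma dense_in_A_superset:
  "dense_in_A d S \<Longrightarrow> S \<subseteq> T \<Longrightarrow> T \<subseteq> A_set d \<Longrightarrow> dense_in_A d T"
  unfolding dense_in_A_def by blast

lemma pdeg_less_imp_degree_less: "pdeg p < pdeg q \<Longrightarrow> q \<noteq> 0 \<and> (p = 0 \<or> degree p < degree q)"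
  by (auto simp: pdeg_def split: if_splits)

lemma P_set_subset_A_set: "P_set d \<subseteq> A_set d"
proof
  fix \<phi> assume "\<phi> \<in> P_set d"
  then obtain f g h where \<phi>: "\<phi> = (f, g, h)" and fg: "pdeg f < pdeg g" and gh: "pdeg g < pdeg h"
    and h: "pdeg h \<le> ereal (real d)" by (auto simp: P_set_def)
  from pdeg_less_imp_degree_less[OF gh] pdeg_less_imp_degree_less[OF fg] h
  have "g \<noteq> 0" "degree g < d" "f = 0 \<or> degree f + 2 \<le> d"
    by (auto simp: pdeg_le_iff)
  then show "\<phi> \<in> A_set d"
    using h by (auto simp: A_set_def \<phi> pdeg_def)
qed

lemma Q_set_subset_P_set: "2 \<le> d \<Longrightarrow> Q_set d \<subseteq> P_set d"
  by (auto simp: Q_set_def P_set_def)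

lemma P_set_subset_O_set: "P_set d \<subseteq> O_set d"
  using P_set_subset_A_set by (auto simp: O_set_def P_set_def)

theorem mainTheorem13:
  fixes d :: nat
  assumes "d \<ge> 2"
  shows "dense_in_A d (Q_set d) \<and> dense_in_A d (P_set d) \<and> dense_in_A d (O_set d)"
proof -
  have Q: "dense_in_A d (Q_set d)" using dense_in_A_Q_set assms .
  have QP: "Q_set d \<subseteq> P_set d" using Q_set_subset_P_set assms .
  have "O_set d \<subseteq> A_set d" by (auto simp: O_set_def)
  then show ?thesis
    using Q QP P_set_subset_O_set P_set_subset_A_set dense_in_A_superset by blast
qed

end
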